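(* Let $G$ be the graph with vertex set $\{a_i,b_i,c_i : i\in[4]\}\cup\{q_i^j,r_i^j : i\in[4], j\in[2]\}$ and edges: the three four-cycles $A$: $a_ia_{i\bmod 4+1}$, $B$: $b_ib_{i\bmod 4+1}$, $C$: $c_ic_{i\bmod 4+1}$ ($i\in[4]$); $q_i^j a_k, q_i^j b_k, q_i^j c_k$ for all $i,k\in[4]$, $j\in[2]$; $r_i^jq_i^j$; and $r_i^ja_i, r_i^ja_{i\bmod 4+1}, r_i^jb_i, r_i^jb_{i\bmod 4+1}, r_i^jc_i, r_i^jc_{i\bmod 4+1}$ for $i\in[4],j\in[2]$. Let $Q=\{q_i^j : i\in[4],j\in[2]\}$. Suppose $(A,\mathcal{D})$ is a planar geometric storyplan of $G$ (here $A(\cdot)$ denotes the visible-interval function), and let $I=\{A(q) : q\in Q\}$. Then there exists a set $I'\subset I$ with $|I'|\ge 6$ such that for every $[s,e]\in I'$ and every $t\in[s,e]$, all vertices of the three four-cycles $A$, $B$ and $C$ are visible at $t$.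
   Context: A storyplan of a graph $G$ on time steps $[\ell]$ is a pair $(A,\mathcal{D})$ where $A$ assigns to each vertex $v$ a nonempty interval $A(v)\subseteq[\ell]$ of consecutive integers ($v$ is visible at each $t\in A(v)$), adjacent vertices have intersecting intervals, and $\mathcal{D}$ assigns one fixed point to each vertex and one fixed curve to each edge. The frame at $t$ is the drawing under $\mathcal{D}$ of $G[\{v : t\in A(v)\}]$. The storyplan is planar geometric if every frame is a planar drawing with all edges straight-line segments. *)

theory Defs
  imports "HOL-Analysis.Analysis"
begin

text \<open>The drawing assigns a point in the plane to
  every vertex; since the storyplan is geometric, the curve of an edge {u,v} is the
  straight segment between the points of u and v, i.e. the convex hull of the image.\<close>

definition edge_seg :: "('v \<Rightarrow> real^2) \<Rightarrow> 'v set \<Rightarrow> (real^2) set" where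
  "edge_seg p e = convex hull (p ` e)"

definition planar_straight :: "'v set \<Rightarrow> 'v set set \<Rightarrow> ('v \<Rightarrow> real^2) \<Rightarrow> bool" where
  "planar_straight W F p \<longleftrightarrow>
     inj_on p W \<and>
     (\<forall>e\<in>F. \<forall>w\<in>W. w \<notin> e \<longrightarrow> p w \<notin> edge_seg p e) \<and>
     (\<forall>e1\<in>F. \<forall>e2\<in>F. e1 \<noteq> e2 \<longrightarrow> edge_seg p e1 \<inter> edge_seg p e2 \<subseteq> p ` (e1 \<inter> e2))"

definition visible :: "'v set \<Rightarrow> ('v \<Rightarrow> nat set) \<Rightarrow> nat \<Rightarrow> 'v set" where
  "visible V A t = {v \<in> V. t \<in> A v}"

definition planar_geometric_storyplan ::
  "'v set \<Rightarrow> 'v set set \<Rightarrow> nat \<Rightarrow> ('v \<Rightarrow> nat set) \<Rightarrow> ('v \<Rightarrow> real^2) \<Rightarrow> bool" where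
  "planar_geometric_storyplan V E l A p \<longleftrightarrow>
     (\<forall>v\<in>V. \<exists>s e. 1 \<le> s \<and> s \<le> e \<and> e \<le> l \<and> A v = {s..e}) \<and>
     (\<forall>u\<in>V. \<forall>v\<in>V. {u, v} \<in> E \<longrightarrow> A u \<inter> A v \<noteq> {}) \<and>
     (\<forall>t\<in>{1..l}. planar_straight (visible V A t) {e \<in> E. e \<subseteq> visible V A t} p)"

datatype vtx = Av nat | Bv nat | Cv nat | Qv nat nat | Rv nat nat

definition nxt :: "nat \<Rightarrow> nat" where "nxt i = i mod 4 + 1"

definition cycV :: "vtx set" where
  "cycV = {Av i | i. i \<in> {1..4}} \<union> {Bv i | i. i \<in> {1..4}} \<union> {Cv i | i. i \<in> {1..4}}"

definition QV :: "vtx set" where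
  "QV = {Qv i j | i j. i \<in> {1..4} \<and> j \<in> {1..2}}"

definition GV :: "vtx set" where
  "GV = cycV \<union> QV \<union> {Rv i j | i j. i \<in> {1..4} \<and> j \<in> {1..2}}"

definition GE :: "vtx set set" where
  "GE =
     {{Av i, Av (nxt i)} | i. i \<in> {1..4}} \<union>
     {{Bv i, Bv (nxt i)} | i. i \<in> {1..4}} \<union>
     {{Cv i, Cv (nxt i)} | i. i \<in> {1..4}} \<union>
     {{Qv i j, Av k} | i j k. i \<in> {1..4} \<and> k \<in> {1..4} \<and> j \<in> {1..2}} \<union>
     {{Qv i j, Bv k} | i j k. i \<in> {1..4} \<and> k \<in> {1..4} \<and> j \<in> {1..2}} \<union>
     {{Qv i j, Cv k} | i j k. i \<in> {1..4} \<and> k \<in> {1..4} \<and> j \<in> {1..2}} \<union>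
     {{Rv i j, Qv i j} | i j. i \<in> {1..4} \<and> j \<in> {1..2}} \<union>
     {{Rv i j, Av i} | i j. i \<in> {1..4} \<and> j \<in> {1..2}} \<union>
     {{Rv i j, Av (nxt i)} | i j. i \<in> {1..4} \<and> j \<in> {1..2}} \<union>
     {{Rv i j, Bv i} | i j. i \<in> {1..4} \<and> j \<in> {1..2}} \<union>
     {{Rv i j, Bv (nxt i)} | i j. i \<in> {1..4} \<and> j \<in> {1..2}} \<union>
     {{Rv i j, Cv i} | i j. i \<in> {1..4} \<and> j \<in> {1..2}} \<union>
     {{Rv i j, Cv (nxt i)} | i j. i \<in> {1..4} \<and> j \<in> {1..2}}"

end

theory Submission
  imports Defs
begin

lemma connected_subset_inside:
  assumes "connected T" "S \<inter> T = {}" "inside S \<inter> T \<noteq> {}"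
  shows "T \<subseteq> inside S"
  using inside_outside_intersect_connected[OF assms(1,3)] assms(2) inside_Un_outside by blast

lemma connected_subset_inside_or_outside:
  assumes "connected T" "S \<inter> T = {}"
  shows "T \<subseteq> inside S \<or> T \<subseteq> outside S"
  using connected_subset_inside[OF assms] assms(2) inside_Un_outside by blast

definition arc_interior :: "(real \<Rightarrow> 'a::topological_space) \<Rightarrow> 'a set" where
  "arc_interior g = path_image g - {pathstart g, pathfinish g}"

lemma arc_interior_nonempty:
  assumes "arc g" shows "arc_interior g \<noteq> {}"
proof -
  have "inj_on g {0..1}" using assms by (auto simp: arc_def)
  then have "g (1/2) \<noteq> g 0" "g (1/2) \<noteq> g 1" by (auto dest: inj_onD)
  then have "g (1/2) \<in> arc_interior g"
    by (auto simp: arc_interior_def path_image_def pathstart_def pathfinish_def)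
  then show ?thesis by blast
qed

lemma path_image_subset_closure_arc_interior:
  assumes "arc g" shows "path_image g \<subseteq> closure (arc_interior g)"
proof -
  have "g ` {0<..<1} \<subseteq> arc_interior g"
    using assms by (force simp: arc_def arc_interior_def path_image_def pathstart_def
        pathfinish_def dest: inj_onD)
  also have "\<dots> \<subseteq> closure (arc_interior g)" by (rule closure_subset)
  finally have "g ` closure {0<..<1} \<subseteq> closure (arc_interior g)"
    using assms by (intro image_closure_subset) (auto simp: arc_def path_def)
  then show ?thesis by (simp add: path_image_def)
qed

lemma connected_arc_interior:
  assumes "arc g" shows "connected (arc_interior g)"
  using connected_simple_path_endless[OF arc_imp_simple_path[OF assms]]
  by (simp add: arc_interior_def)

lemma arc_join3:
  assumes "arc p" "arc q" "arc r" "pathfinish p = pathstart q" "pathfinish q = pathstart r"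
    "path_image p \<inter> path_image q \<subseteq> {pathstart q}" "path_image q \<inter> path_image r \<subseteq> {pathstart r}"
    "path_image p \<inter> path_image r = {}"
  shows "arc (p +++ q +++ r)"
    and "path_image (p +++ q +++ r) = path_image p \<union> path_image q \<union> path_image r"
proof -
  have "arc (q +++ r)" using assms by (intro arc_join) auto
  moreover have "path_image (q +++ r) = path_image q \<union> path_image r"
    using assms by (simp add: path_image_join)
  ultimately show "arc (p +++ q +++ r)" using assms by (intro arc_join) auto
  show "path_image (p +++ q +++ r) = path_image p \<union> path_image q \<union> path_image r"
    using assms by (simp add: path_image_join Un_assoc)
qed

lemma outside_Un_if_connected_Int:
  fixes S T :: "complex set"
  assumes "compact S" "compact T" "connected (S \<inter> T)" "connected (outside S)" "connected (outside T)"
    and "z \<in> outside S" "z \<in> outside T"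
  shows "z \<in> outside (S \<union> T)"
proof -
  have "bounded (S \<union> T)" using assms by (auto intro: compact_imp_bounded)
  then obtain w where w: "w \<in> outside (S \<union> T)" using outside_bounded_nonempty by blast
  then have "w \<in> outside S" "w \<in> outside T" using outside_mono by blast+
  then have "connected_component (- S) z w" "connected_component (- T) z w"
    using assms(4-7) outside_no_overlap unfolding connected_component_def by blast+
  then have "connected_component (- (S \<union> T)) w z"
    using Janiszewski[of S T z w] assms(1-3) by (auto intro: compact_imp_closed connected_component_sym)
  then show ?thesis using outside_same_component w by blast
qed

definition theta_curve ::
  "complex \<Rightarrow> complex \<Rightarrow> (real \<Rightarrow> complex) \<Rightarrow> (real \<Rightarrow> complex) \<Rightarrow> (real \<Rightarrow> complex) \<Rightarrow> bool"
where
  "theta_curve a b c1 c2 c3 \<longleftrightarrow>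
     (\<forall>c \<in> {c1, c2, c3}. arc c \<and> pathstart c = a \<and> pathfinish c = b) \<and>
     path_image c1 \<inter> path_image c2 = {a, b} \<and> path_image c1 \<inter> path_image c3 = {a, b} \<and>
     path_image c2 \<inter> path_image c3 = {a, b}"

lemma theta_curve_swap:
  assumes "theta_curve a b c1 c2 c3"
  shows "theta_curve a b c2 c1 c3" and "theta_curve a b c1 c3 c2"
  using assms unfolding theta_curve_def by (simp_all add: Int_commute insert_commute conj_ac)

lemma theta_curveD:
  assumes "theta_curve a b c1 c2 c3"
  shows "arc c1" "arc c2" "arc c3" "a \<noteq> b"
    and "arc_interior c1 = path_image c1 - {a, b}" "arc_interior c3 = path_image c3 - {a, b}"
    and "path_image c1 \<inter> path_image c2 = {a, b}" "path_image c1 \<inter> path_image c3 = {a, b}"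
    and "path_image c2 \<inter> path_image c3 = {a, b}"
  using assms arc_distinct_ends[of c1] unfolding theta_curve_def arc_interior_def by simp_all

lemma theta_curve_Jordan:
  assumes "theta_curve a b c1 c2 c3"
  defines "C \<equiv> path_image c1 \<union> path_image c2"
  shows "inside C \<noteq> {}" "connected (inside C)" "connected (outside C)"
    and "frontier (inside C) = C" "compact C"
proof -
  have arcs: "arc c1" "arc c2" and ends: "pathstart c1 = a" "pathfinish c1 = b"
    "pathstart c2 = a" "pathfinish c2 = b" and meet: "path_image c1 \<inter> path_image c2 = {a, b}"
    using assms unfolding theta_curve_def by simp_all
  have "simple_path (c1 +++ reversepath c2)"
    using arcs ends meet by (subst simple_path_join_loop_eq) (auto simp: arc_reversepath)
  moreover have "path_image (c1 +++ reversepath c2) = C"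
    using ends by (simp add: path_image_join C_def)
  ultimately show "inside C \<noteq> {}" "connected (inside C)" "connected (outside C)"
    "frontier (inside C) = C"
    using Jordan_inside_outside[of "c1 +++ reversepath c2"] ends by auto
  show "compact C"
    using arcs by (auto simp: C_def intro!: compact_Un compact_path_image arc_imp_path)
qed

lemma theta_curve_split_inside:
  assumes "theta_curve a b c1 c2 c3" "path_image c3 \<inter> inside (path_image c1 \<union> path_image c2) \<noteq> {}"
  shows "inside (path_image c1 \<union> path_image c2) =
    inside (path_image c1 \<union> path_image c3) \<union> inside (path_image c2 \<union> path_image c3) \<union> arc_interior c3"
proof -
  have "simple_path c1" "pathstart c1 = a" "pathfinish c1 = b"
    and "simple_path c2" "pathstart c2 = a" "pathfinish c2 = b"
    and "simple_path c3" "pathstart c3 = a" "pathfinish c3 = b"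
    using assms(1) unfolding theta_curve_def by (simp_all add: arc_imp_simple_path)
  then obtain "inside (path_image c1 \<union> path_image c3) \<union> inside (path_image c2 \<union> path_image c3) \<union>
      (path_image c3 - {a, b}) = inside (path_image c1 \<union> path_image c2)"
    by (rule split_inside_simple_closed_curve[OF _ _ _ _ _ _ _ _ _ theta_curveD(4,7,8,9)[OF assms(1)] assms(2)])
  then show ?thesis using theta_curveD(6)[OF assms(1)] by simp
qed

lemma closure_subset_inside_Un:
  fixes S :: "'a::real_normed_vector set"
  assumes "closed S" "E \<subseteq> inside S"
  shows "closure E \<subseteq> S \<union> inside S"
  using closure_mono[OF assms(2)] closure_inside_subset[OF assms(1)] by blast

lemma closed_path_image_Un:
  fixes c1 c2 :: "real \<Rightarrow> 'a::t2_space"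
  assumes "path c1" "path c2" shows "closed (path_image c1 \<union> path_image c2)"
  by (intro closed_Un closed_path_image assms)

lemma theta_curve_no_bridge_inside:
  assumes theta: "theta_curve a b c1 c2 d"
    and x: "x \<in> arc_interior c1" and y: "y \<in> arc_interior c2"
    and E: "connected E" "E \<inter> (path_image c1 \<union> path_image c2 \<union> path_image d) = {}"
      "x \<in> closure E" "y \<in> closure E"
    and side: "arc_interior d \<subseteq> inside (path_image c1 \<union> path_image c2)"
      "E \<subseteq> inside (path_image c1 \<union> path_image c2)"
  shows False
proof -
  let ?C1 = "path_image c1" and ?C2 = "path_image c2" and ?D = "path_image d"
  note th = theta_curveD[OF theta] theta_curveD[OF theta_curve_swap(1)[OF theta]]
  have split: "inside (?C1 \<union> ?C2) = inside (?C1 \<union> ?D) \<union> inside (?C2 \<union> ?D) \<union> arc_interior d"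
    using arc_interior_nonempty[OF th(3)] side(1)
    by (intro theta_curve_split_inside[OF theta]) (auto simp: arc_interior_def)
  have "x \<in> ?C1 - {a, b}" "y \<in> ?C2 - {a, b}"
    using x y theta_curveD(5)[OF theta] theta_curveD(5)[OF theta_curve_swap(1)[OF theta]] by auto
  then have notin: "x \<notin> ?C2 \<union> ?D \<union> inside (?C1 \<union> ?C2)" "y \<notin> ?C1 \<union> ?D \<union> inside (?C1 \<union> ?C2)"
    using th(7,8,9) inside_no_overlap by blast+
  have closed: "closed (?C1 \<union> ?D)" "closed (?C2 \<union> ?D)"
    using th by (simp_all add: closed_path_image_Un arc_imp_path)
  have parts: "inside (?C1 \<union> ?D) \<subseteq> inside (?C1 \<union> ?C2)" "inside (?C2 \<union> ?D) \<subseteq> inside (?C1 \<union> ?C2)"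
    unfolding split by blast+
  show False
  proof (cases "inside (?C1 \<union> ?D) \<inter> E = {}")
    case True
    have "E \<inter> arc_interior d = {}" using E(2) by (auto simp: arc_interior_def)
    then have "E \<subseteq> inside (?C2 \<union> ?D)"
      using True side(2) unfolding split by blast
    then have "x \<in> ?C2 \<union> ?D \<union> inside (?C2 \<union> ?D)"
      using closure_subset_inside_Un[OF closed(2)] E(3) by blast
    then show False using notin(1) parts(2) by blast
  next
    case False
    then have "E \<subseteq> inside (?C1 \<union> ?D)"
      using E(2) by (intro connected_subset_inside[OF E(1)]) auto
    then have "y \<in> ?C1 \<union> ?D \<union> inside (?C1 \<union> ?D)"
      using closure_subset_inside_Un[OF closed(1)] E(4) by blast
    then show False using notin(2) parts(1) by blast
  qed
qed

lemma theta_curve_inside_disjoint: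
  assumes theta: "theta_curve a b c1 c2 d"
    and side: "arc_interior d \<subseteq> outside (path_image c1 \<union> path_image c2)"
    and no: "path_image c2 \<inter> inside (path_image c1 \<union> path_image d) = {}"
  shows "inside (path_image c1 \<union> path_image d) \<inter> inside (path_image c1 \<union> path_image c2) = {}"
proof
  let ?C1 = "path_image c1" and ?C2 = "path_image c2" and ?D = "path_image d"
  note J = theta_curve_Jordan[OF theta_curve_swap(2)[OF theta]]
  show "inside (?C1 \<union> ?D) \<inter> inside (?C1 \<union> ?C2) \<subseteq> {}"
  proof
    fix z assume z: "z \<in> inside (?C1 \<union> ?D) \<inter> inside (?C1 \<union> ?C2)"
    have "(?C1 \<union> ?C2) \<inter> inside (?C1 \<union> ?D) = {}"
      using no inside_no_overlap[of "?C1 \<union> ?D"] by blast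
    then have "inside (?C1 \<union> ?D) \<subseteq> inside (?C1 \<union> ?C2)"
      using z by (intro connected_subset_inside[OF J(2)]) auto
    then have "closure (inside (?C1 \<union> ?D)) \<subseteq> ?C1 \<union> ?C2 \<union> inside (?C1 \<union> ?C2)"
      using theta_curveD(1,2)[OF theta]
      by (intro closure_subset_inside_Un closed_path_image_Un arc_imp_path)
    moreover have "?D \<subseteq> closure (inside (?C1 \<union> ?D))"
      using J(4) by (auto simp: frontier_def)
    moreover obtain w where "w \<in> arc_interior d"
      using arc_interior_nonempty[OF theta_curveD(3)[OF theta]] by blast
    then have "w \<in> ?D" "w \<in> outside (?C1 \<union> ?C2)"
      using side by (auto simp: arc_interior_def)
    ultimately show "z \<in> {}"
      using inside_Int_outside[of "?C1 \<union> ?C2"] outside_no_overlap[of "?C1 \<union> ?C2"] by blast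
  qed
qed simp

lemma theta_curve_outside_arc_encloses:
  assumes theta: "theta_curve a b c1 c2 d"
    and side: "arc_interior d \<subseteq> outside (path_image c1 \<union> path_image c2)"
  shows "path_image c2 \<inter> inside (path_image c1 \<union> path_image d) \<noteq> {} \<or>
         path_image c1 \<inter> inside (path_image c2 \<union> path_image d) \<noteq> {}"
proof (rule ccontr)
  let ?C1 = "path_image c1" and ?C2 = "path_image c2" and ?D = "path_image d"
  assume "\<not> ?thesis"
  moreover have C21: "?C2 \<union> ?C1 = ?C1 \<union> ?C2" by blast
  ultimately have disj: "inside (?C1 \<union> ?D) \<inter> inside (?C1 \<union> ?C2) = {}"
    "inside (?C2 \<union> ?D) \<inter> inside (?C1 \<union> ?C2) = {}"
    using theta_curve_inside_disjoint[OF theta side]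
      theta_curve_inside_disjoint[OF theta_curve_swap(1)[OF theta], unfolded C21, OF side]
    by blast+
  note J1 = theta_curve_Jordan[OF theta_curve_swap(2)[OF theta]]
  note J2 = theta_curve_Jordan[OF theta_curve_swap(2)[OF theta_curve_swap(1)[OF theta]]]
  obtain z where z: "z \<in> inside (?C1 \<union> ?C2)"
    using theta_curve_Jordan(1)[OF theta] by blast
  have "z \<notin> ?C1 \<union> ?C2" using z inside_no_overlap by blast
  moreover have "z \<notin> arc_interior d" using z side inside_Int_outside[of "?C1 \<union> ?C2"] by blast
  ultimately have "z \<notin> ?D" using theta_curveD(6,7)[OF theta] by blast
  then have "z \<in> outside (?C1 \<union> ?D)" "z \<in> outside (?C2 \<union> ?D)"
    using z disj \<open>z \<notin> ?C1 \<union> ?C2\<close> inside_Un_outside by blast+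
  moreover have "(?C1 \<union> ?D) \<inter> (?C2 \<union> ?D) = ?D"
    using theta_curveD(7,8)[OF theta] by blast
  moreover have "connected ?D"
    using theta_curveD(3)[OF theta] by (simp add: connected_path_image arc_imp_path)
  ultimately have "z \<in> outside ((?C1 \<union> ?D) \<union> (?C2 \<union> ?D))"
    using outside_Un_if_connected_Int[OF J1(5) J2(5) _ J1(3) J2(3)] by metis
  then have "z \<in> outside (?C1 \<union> ?C2)"
    using outside_mono[of "?C1 \<union> ?C2" "(?C1 \<union> ?D) \<union> (?C2 \<union> ?D)"] by blast
  then show False using z inside_Int_outside[of "?C1 \<union> ?C2"] by blast
qed

lemma theta_curve_no_bridge_outside:
  assumes theta: "theta_curve a b c1 c2 d"
    and x: "x \<in> arc_interior c1" and y: "y \<in> arc_interior c2"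
    and E: "connected E" "E \<inter> (path_image c1 \<union> path_image c2 \<union> path_image d) = {}"
      "x \<in> closure E" "y \<in> closure E"
    and side: "E \<subseteq> outside (path_image c1 \<union> path_image c2)"
    and meet: "path_image c2 \<inter> inside (path_image c1 \<union> path_image d) \<noteq> {}"
  shows False
proof -
  let ?C1 = "path_image c1" and ?C2 = "path_image c2" and ?D = "path_image d"
  have split: "inside (?C1 \<union> ?D) = inside (?C1 \<union> ?C2) \<union> inside (?D \<union> ?C2) \<union> arc_interior c2"
    by (rule theta_curve_split_inside[OF theta_curve_swap(2)[OF theta] meet])
  have "y \<in> inside (?C1 \<union> ?D)" using y split by blast
  moreover have "open (inside (?C1 \<union> ?D))"
    using theta_curveD(1,3)[OF theta] by (intro open_inside closed_path_image_Un arc_imp_path)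
  ultimately have "inside (?C1 \<union> ?D) \<inter> E \<noteq> {}"
    using E(4) open_Int_closure_eq_empty by blast
  then have "E \<subseteq> inside (?C1 \<union> ?D)"
    using E(2) by (intro connected_subset_inside[OF E(1)]) auto
  moreover have "E \<inter> inside (?C1 \<union> ?C2) = {}"
    using side inside_Int_outside[of "?C1 \<union> ?C2"] by blast
  moreover have "E \<inter> arc_interior c2 = {}" using E(2) by (auto simp: arc_interior_def)
  ultimately have "E \<subseteq> inside (?D \<union> ?C2)" unfolding split by blast
  then have "x \<in> ?D \<union> ?C2 \<union> inside (?D \<union> ?C2)"
    using theta_curveD(2,3)[OF theta] E(3)
    by (meson closure_subset_inside_Un closed_path_image_Un arc_imp_path subsetD)
  moreover have "x \<in> ?C1 - {a, b}" using x theta_curveD(5)[OF theta] by blast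
  ultimately show False
    using theta_curveD(7,8)[OF theta] split inside_no_overlap[of "?C1 \<union> ?D"] by blast
qed

lemma theta_curve_no_bridge:
  assumes theta: "theta_curve a b c1 c2 d"
    and x: "x \<in> arc_interior c1" and y: "y \<in> arc_interior c2"
    and E: "connected E" "E \<inter> (path_image c1 \<union> path_image c2 \<union> path_image d) = {}"
      "x \<in> closure E" "y \<in> closure E"
    and S: "S \<in> {inside (path_image c1 \<union> path_image c2), outside (path_image c1 \<union> path_image c2)}"
      "arc_interior d \<subseteq> S" "E \<subseteq> S"
  shows False
proof -
  let ?C1 = "path_image c1" and ?C2 = "path_image c2" and ?D = "path_image d"
  consider "S = inside (?C1 \<union> ?C2)" | "S = outside (?C1 \<union> ?C2)" using S(1) by blast
  then show False
  proof cases
    case 1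
    then show False using theta_curve_no_bridge_inside[OF theta x y E] S(2,3) by blast
  next
    case 2
    then have out: "arc_interior d \<subseteq> outside (?C1 \<union> ?C2)" "E \<subseteq> outside (?C1 \<union> ?C2)"
      using S(2,3) by simp_all
    then have out': "E \<subseteq> outside (?C2 \<union> ?C1)" by (simp add: Un_commute)
    have E': "E \<inter> (?C2 \<union> ?C1 \<union> ?D) = {}" using E(2) by blast
    from theta_curve_outside_arc_encloses[OF theta out(1)] show False
    proof
      assume "?C2 \<inter> inside (?C1 \<union> ?D) \<noteq> {}"
      then show False
        by (rule theta_curve_no_bridge_outside[OF theta x y E out(2)])
    next
      assume "?C1 \<inter> inside (?C2 \<union> ?D) \<noteq> {}"
      then show False
        by (rule theta_curve_no_bridge_outside[OF theta_curve_swap(1)[OF theta] y x E(1) E' E(4,3) out'])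
    qed
  qed
qed

definition K33_arc_embedding ::
  "(nat \<Rightarrow> complex) \<Rightarrow> (nat \<Rightarrow> complex) \<Rightarrow> (nat \<Rightarrow> nat \<Rightarrow> real \<Rightarrow> complex) \<Rightarrow> bool"
where
  "K33_arc_embedding u v g \<longleftrightarrow>
     inj_on u {..<3} \<and> inj_on v {..<3} \<and> u ` {..<3} \<inter> v ` {..<3} = {} \<and>
     (\<forall>i<3. \<forall>j<3. arc (g i j) \<and> pathstart (g i j) = u i \<and> pathfinish (g i j) = v j) \<and>
     (\<forall>i<3. \<forall>j<3. \<forall>i'<3. \<forall>j'<3. (i, j) \<noteq> (i', j') \<longrightarrow>
        path_image (g i j) \<inter> path_image (g i' j') \<subseteq> {u i, v j} \<inter> {u i', v j'})"

lemma K33_arc_embedding_permute: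
  assumes K: "K33_arc_embedding u v g"
    and \<sigma>: "bij_betw \<sigma> {..<3} {..<3}" and \<tau>: "bij_betw \<tau> {..<3} {..<3}"
  shows "K33_arc_embedding (u \<circ> \<sigma>) (v \<circ> \<tau>) (\<lambda>i j. g (\<sigma> i) (\<tau> j))"
proof -
  have "\<sigma> i < 3" "\<tau> i < 3" if "i < 3" for i
    using that \<sigma> \<tau> by (auto dest: bij_betw_apply)
  moreover have "\<sigma> i = \<sigma> i' \<longleftrightarrow> i = i'" "\<tau> i = \<tau> i' \<longleftrightarrow> i = i'" if "i < 3" "i' < 3" for i i'
    using that \<sigma> \<tau> by (auto simp: bij_betw_def dest: inj_onD)
  moreover have "(u \<circ> \<sigma>) ` {..<3} = u ` {..<3}" "(v \<circ> \<tau>) ` {..<3} = v ` {..<3}"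
    using \<sigma> \<tau> by (metis image_comp bij_betw_imp_surj_on)+
  ultimately show ?thesis
    using K bij_betw_imp_inj_on[OF \<sigma>] bij_betw_imp_inj_on[OF \<tau>]
    unfolding K33_arc_embedding_def
    by (auto intro: comp_inj_on inj_on_subset simp: bij_betw_imp_surj_on[OF \<sigma>] bij_betw_imp_surj_on[OF \<tau>])
qed

definition K33_hexagon :: "(nat \<Rightarrow> nat \<Rightarrow> real \<Rightarrow> complex) \<Rightarrow> complex set" where
  "K33_hexagon g = path_image (g 0 0) \<union> path_image (g 1 0) \<union> path_image (g 1 1) \<union>
     path_image (g 2 1) \<union> path_image (g 2 2) \<union> path_image (g 0 2)"

context
  fixes u v :: "nat \<Rightarrow> complex" and g :: "nat \<Rightarrow> nat \<Rightarrow> real \<Rightarrow> complex"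
  assumes K: "K33_arc_embedding u v g"
begin

lemma K33_arc: "i < 3 \<Longrightarrow> j < 3 \<Longrightarrow> arc (g i j)"
  and K33_pathstart [simp]: "i < 3 \<Longrightarrow> j < 3 \<Longrightarrow> pathstart (g i j) = u i"
  and K33_pathfinish [simp]: "i < 3 \<Longrightarrow> j < 3 \<Longrightarrow> pathfinish (g i j) = v j"
  using K by (simp_all add: K33_arc_embedding_def)

lemma K33_vertices_distinct [simp]:
  "i < 3 \<Longrightarrow> i' < 3 \<Longrightarrow> u i = u i' \<longleftrightarrow> i = i'"
  "j < 3 \<Longrightarrow> j' < 3 \<Longrightarrow> v j = v j' \<longleftrightarrow> j = j'"
  "i < 3 \<Longrightarrow> j < 3 \<Longrightarrow> u i \<noteq> v j" "i < 3 \<Longrightarrow> j < 3 \<Longrightarrow> v j \<noteq> u i"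
  using K by (auto simp: K33_arc_embedding_def dest: inj_onD)

lemma K33_ends_in_path_image:
  "i < 3 \<Longrightarrow> j < 3 \<Longrightarrow> u i \<in> path_image (g i j)"
  "i < 3 \<Longrightarrow> j < 3 \<Longrightarrow> v j \<in> path_image (g i j)"
  using pathstart_in_path_image[of "g i j"] pathfinish_in_path_image[of "g i j"] by simp_all

lemma K33_path_image_Int:
  assumes "i < 3" "j < 3" "i' < 3" "j' < 3" "(i, j) \<noteq> (i', j')"
  shows "path_image (g i j) \<inter> path_image (g i' j') =
    (if i = i' then {u i} else {}) \<union> (if j = j' then {v j} else {})"
proof -
  have "path_image (g i j) \<inter> path_image (g i' j') \<subseteq> {u i, v j} \<inter> {u i', v j'}"
    using K assms by (simp add: K33_arc_embedding_def)
  also have "\<dots> = (if i = i' then {u i} else {}) \<union> (if j = j' then {v j} else {})"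
    using assms by auto
  finally show ?thesis
    using assms K33_ends_in_path_image[of i j] K33_ends_in_path_image[of i' j'] by auto
qed

lemma K33_arc_interior:
  "i < 3 \<Longrightarrow> j < 3 \<Longrightarrow> arc_interior (g i j) = path_image (g i j) - {u i, v j}"
  by (simp add: arc_interior_def)

lemma K33_arc_interior_disjoint:
  assumes "i < 3" "j < 3" "i' < 3" "j' < 3" "(i, j) \<noteq> (i', j')"
  shows "arc_interior (g i j) \<inter> path_image (g i' j') = {}"
  using K33_path_image_Int[OF assms] assms by (auto simp: K33_arc_interior split: if_splits)

lemma K33_chord_hexagon_disjoint:
  assumes "(i, j) \<in> {(0, 1), (1, 2), (2, 0)}"
  shows "arc_interior (g i j) \<inter> K33_hexagon g = {}"
  using assms unfolding K33_hexagon_def Int_Un_distrib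
  by (elim insertE emptyE) (simp_all add: K33_arc_interior_disjoint)

lemma K33_chords_on_opposite_sides:
  assumes "S \<in> {inside (K33_hexagon g), outside (K33_hexagon g)}"
  shows "\<not> (arc_interior (g 0 1) \<subseteq> S \<and> arc_interior (g 1 2) \<subseteq> S)"
proof
  assume S: "arc_interior (g 0 1) \<subseteq> S \<and> arc_interior (g 1 2) \<subseteq> S"
  let ?G = "\<lambda>i j. path_image (g i j)"
  define c1 where "c1 = g 0 0 +++ reversepath (g 1 0) +++ g 1 1"
  define c2 where "c2 = g 0 2 +++ reversepath (g 2 2) +++ g 2 1"
  note Int_simps = Int_Un_distrib Int_Un_distrib2 K33_path_image_Int
  have c1: "arc c1" "path_image c1 = ?G 0 0 \<union> ?G 1 0 \<union> ?G 1 1"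
    using arc_join3[of "g 0 0" "reversepath (g 1 0)" "g 1 1"]
    by (simp_all add: c1_def K33_arc arc_reversepath Int_simps)
  have c2: "arc c2" "path_image c2 = ?G 0 2 \<union> ?G 2 2 \<union> ?G 2 1"
    using arc_join3[of "g 0 2" "reversepath (g 2 2)" "g 2 1"]
    by (simp_all add: c2_def K33_arc arc_reversepath Int_simps)
  have theta: "theta_curve (u 0) (v 1) c1 c2 (g 0 1)"
    unfolding theta_curve_def using c1 c2
    by (simp add: c1_def c2_def K33_arc Int_simps insert_commute)
  have x: "u 1 \<in> arc_interior c1" and y: "v 2 \<in> arc_interior c2"
    using c1 c2 K33_ends_in_path_image by (simp_all add: arc_interior_def c1_def c2_def)
  have closure: "u 1 \<in> closure (arc_interior (g 1 2))" "v 2 \<in> closure (arc_interior (g 1 2))"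
    using path_image_subset_closure_arc_interior[OF K33_arc, of 1 2] K33_ends_in_path_image by auto
  have disj: "arc_interior (g 1 2) \<inter> (path_image c1 \<union> path_image c2 \<union> ?G 0 1) = {}"
    unfolding c1(2) c2(2) Int_Un_distrib by (simp add: K33_arc_interior_disjoint)
  have "path_image c1 \<union> path_image c2 = K33_hexagon g"
    unfolding c1(2) c2(2) K33_hexagon_def by blast
  then show False
    using theta_curve_no_bridge[OF theta x y connected_arc_interior[OF K33_arc] disj closure] assms S
    by (simp, blast)
qed

end

lemma bij_betw_lessThan_3:
  "bij_betw (\<lambda>i::nat. (i + 1) mod 3) {..<3} {..<3}"
  "bij_betw (\<lambda>i::nat. (3 - i) mod 3) {..<3} {..<3}"
  "bij_betw (\<lambda>i::nat. 2 - i) {..<3} {..<3}"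
  by (auto simp: bij_betw_def inj_on_def image_def lessThan_nat_numeral)

theorem K33_no_arc_embedding: "\<not> K33_arc_embedding u v g"
proof
  assume K: "K33_arc_embedding u v g"
  let ?H = "K33_hexagon g"
  have chord_side: "\<exists>S \<in> {inside ?H, outside ?H}. arc_interior (g i j) \<subseteq> S"
    if "(i, j) \<in> {(0, 1), (1, 2), (2, 0)}" for i j
  proof -
    have "i < 3" "j < 3" using that by auto
    then have "connected (arc_interior (g i j))" by (intro connected_arc_interior K33_arc[OF K])
    moreover have "?H \<inter> arc_interior (g i j) = {}"
      using K33_chord_hexagon_disjoint[OF K that] by blast
    ultimately have "arc_interior (g i j) \<subseteq> inside ?H \<or> arc_interior (g i j) \<subseteq> outside ?H"
      by (rule connected_subset_inside_or_outside)
    then show ?thesis by blast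
  qed
  obtain S01 S12 S20 where S: "S01 \<in> {inside ?H, outside ?H}" "arc_interior (g 0 1) \<subseteq> S01"
    "S12 \<in> {inside ?H, outside ?H}" "arc_interior (g 1 2) \<subseteq> S12"
    "S20 \<in> {inside ?H, outside ?H}" "arc_interior (g 2 0) \<subseteq> S20"
    using chord_side[of 0 1] chord_side[of 1 2] chord_side[of 2 0] by auto
  then consider "S01 = S12" | "S12 = S20" | "S20 = S01" by blast
  then show False
  proof cases
    case 1
    then show False using K33_chords_on_opposite_sides[OF K S(1)] S(2,4) by blast
  next
    case 2
    let ?\<rho> = "\<lambda>i::nat. (i + 1) mod 3"
    let ?g = "\<lambda>i j. g (?\<rho> i) (?\<rho> j)"
    have K': "K33_arc_embedding (u \<circ> ?\<rho>) (v \<circ> ?\<rho>) ?g"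
      using K bij_betw_lessThan_3(1,1) by (rule K33_arc_embedding_permute)
    have "K33_hexagon ?g = ?H"
      by (simp add: K33_hexagon_def Un_ac numeral_2_eq_2)
    then have "\<not> (arc_interior (?g 0 1) \<subseteq> S12 \<and> arc_interior (?g 1 2) \<subseteq> S12)"
      using K33_chords_on_opposite_sides[OF K', of S12] S(3) by simp
    then show False using 2 S(4,6) by (simp add: numeral_2_eq_2)
  next
    case 3
    let ?\<sigma> = "\<lambda>i::nat. (3 - i) mod 3" and ?\<tau> = "\<lambda>i::nat. 2 - i"
    let ?g = "\<lambda>i j. g (?\<sigma> i) (?\<tau> j)"
    have K': "K33_arc_embedding (u \<circ> ?\<sigma>) (v \<circ> ?\<tau>) ?g"
      using K bij_betw_lessThan_3(2,3) by (rule K33_arc_embedding_permute)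
    have "K33_hexagon ?g = ?H"
      by (simp add: K33_hexagon_def Un_ac numeral_2_eq_2)
    then have "\<not> (arc_interior (?g 0 1) \<subseteq> S01 \<and> arc_interior (?g 1 2) \<subseteq> S01)"
      using K33_chords_on_opposite_sides[OF K', of S01] S(1) by simp
    then show False using 3 S(2,6) by (simp add: numeral_2_eq_2)
  qed
qed

definition complex_of_vec :: "real^2 \<Rightarrow> complex" where
  "complex_of_vec z = Complex (z$1) (z$2)"

lemma linear_complex_of_vec: "linear complex_of_vec"
  by (rule linearI) (simp_all add: complex_of_vec_def complex_eq_iff)

lemma inj_complex_of_vec: "inj complex_of_vec"
  by (rule injI) (simp add: complex_of_vec_def complex_eq_iff vec_eq_iff forall_2)

lemma complex_of_vec_edge_seg:
  "complex_of_vec ` edge_seg p {a, b} = closed_segment (complex_of_vec (p a)) (complex_of_vec (p b))"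
  by (simp add: edge_seg_def convex_hull_linear_image[OF linear_complex_of_vec] segment_convex_hull)

lemma planar_straight_segments_Int:
  fixes p :: "'v \<Rightarrow> real^2"
  defines "P \<equiv> complex_of_vec \<circ> p"
  assumes "planar_straight W F p" "{a, b} \<in> F" "{c, d} \<in> F" "{a, b} \<noteq> {c, d}"
  shows "closed_segment (P a) (P b) \<inter> closed_segment (P c) (P d) \<subseteq> P ` ({a, b} \<inter> {c, d})"
proof -
  have "\<forall>e1\<in>F. \<forall>e2\<in>F. e1 \<noteq> e2 \<longrightarrow> edge_seg p e1 \<inter> edge_seg p e2 \<subseteq> p ` (e1 \<inter> e2)"
    using assms(2) unfolding planar_straight_def by (elim conjE)
  from this[rule_format, OF assms(3,4,5)]
  have "edge_seg p {a, b} \<inter> edge_seg p {c, d} \<subseteq> p ` ({a, b} \<inter> {c, d})" .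
  then have "complex_of_vec ` (edge_seg p {a, b} \<inter> edge_seg p {c, d}) \<subseteq> P ` ({a, b} \<inter> {c, d})"
    unfolding P_def image_comp[symmetric] by (rule image_mono)
  moreover have "complex_of_vec ` (edge_seg p {a, b} \<inter> edge_seg p {c, d}) =
      closed_segment (P a) (P b) \<inter> closed_segment (P c) (P d)"
    unfolding image_Int[OF inj_complex_of_vec] complex_of_vec_edge_seg by (simp add: P_def)
  ultimately show ?thesis by simp
qed


lemma inj_on_planar_straight:
  assumes "planar_straight W F p" shows "inj_on (complex_of_vec \<circ> p) W"
proof (rule comp_inj_on)
  show "inj_on p W" using assms unfolding planar_straight_def by (elim conjE)
  show "inj_on complex_of_vec (p ` W)" by (rule inj_on_subset[OF inj_complex_of_vec]) simp
qed

lemma nth_3_image: "(!) [x0, x1, x2] ` {..<3} = {x0, x1, x2}"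
proof -
  have "{..<3::nat} = {0, 1, 2}" by auto
  then show ?thesis by (simp add: numeral_2_eq_2)
qed

lemma planar_straight_K33_arc_embedding:
  fixes p :: "'v \<Rightarrow> real^2" and u0 u1 u2 v0 v1 v2 :: 'v
  defines "P \<equiv> complex_of_vec \<circ> p" and "U \<equiv> (!) [u0, u1, u2]" and "V \<equiv> (!) [v0, v1, v2]"
  assumes ps: "planar_straight W F p"
    and distinct: "distinct [u0, u1, u2, v0, v1, v2]" and W: "{u0, u1, u2, v0, v1, v2} \<subseteq> W"
    and edges: "\<And>u v. u \<in> {u0, u1, u2} \<Longrightarrow> v \<in> {v0, v1, v2} \<Longrightarrow> (u, v) \<noteq> (u0, v0) \<Longrightarrow> {u, v} \<in> F"
    and g0: "arc g0" "pathstart g0 = P u0" "pathfinish g0 = P v0"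
      "\<And>u v. u \<in> {u0, u1, u2} \<Longrightarrow> v \<in> {v0, v1, v2} \<Longrightarrow> (u, v) \<noteq> (u0, v0) \<Longrightarrow>
         path_image g0 \<inter> closed_segment (P u) (P v) \<subseteq> P ` ({u0, v0} \<inter> {u, v})"
  shows "K33_arc_embedding (P \<circ> U) (P \<circ> V)
    (\<lambda>i j. if (i, j) = (0, 0) then g0 else linepath (P (U i)) (P (V j)))"
    (is "K33_arc_embedding _ _ ?g")
proof -
  have UV: "U ` {..<3} = {u0, u1, u2}" "V ` {..<3} = {v0, v1, v2}"
    unfolding U_def V_def by (rule nth_3_image)+
  have in_UV: "U i \<in> {u0, u1, u2}" "V i \<in> {v0, v1, v2}" if "i < 3" for i
    using that nth_mem[of i "[u0, u1, u2]"] nth_mem[of i "[v0, v1, v2]"] by (simp_all add: U_def V_def)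
  have U0: "U 0 = u0" "V 0 = v0" by (simp_all add: U_def V_def)
  have injUV: "inj_on U {..<3}" "inj_on V {..<3}"
    using distinct unfolding U_def V_def by (auto intro!: inj_on_nth)
  have UV_disjoint: "{u0, u1, u2} \<inter> {v0, v1, v2} = {}"
    using distinct by auto
  have injP: "inj_on P ({u0, u1, u2} \<union> {v0, v1, v2})"
    unfolding P_def by (rule inj_on_subset[OF inj_on_planar_straight[OF ps]]) (use W in auto)
  have U_neq_V: "U i \<noteq> V j" if "i < 3" "j < 3" for i j
    by (metis UV_disjoint disjoint_iff in_UV that)
  have P_UV: "P (U i) \<noteq> P (V j)" if "i < 3" "j < 3" for i j
    using UnI1[OF in_UV(1)[OF that(1)]] UnI2[OF in_UV(2)[OF that(2)]] U_neq_V[OF that]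
      inj_on_eq_iff[OF injP] by metis
  have edge_eq: "{U i, V j} = {U i', V j'} \<longleftrightarrow> (i, j) = (i', j')"
    if "i < 3" "j < 3" "i' < 3" "j' < 3" for i j i' j'
    using that U_neq_V[of i j'] U_neq_V[of i' j]
    by (auto simp: doubleton_eq_iff inj_on_eq_iff[OF injUV(1)] inj_on_eq_iff[OF injUV(2)])
  have edge_in_F: "{U i, V j} \<in> F" if "i < 3" "j < 3" "(i, j) \<noteq> (0, 0)" for i j
  proof (rule edges[OF in_UV(1)[OF that(1)] in_UV(2)[OF that(2)]])
    show "(U i, V j) \<noteq> (u0, v0)"
      using that inj_on_eq_iff[OF injUV(1), of i 0] inj_on_eq_iff[OF injUV(2), of j 0] U0 by auto
  qed
  have Int_image: "P ` ({U i, V j} \<inter> {U i', V j'}) \<subseteq> {P (U i), P (V j)} \<inter> {P (U i'), P (V j')}"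
    for i j i' j' by auto
  have segments: "closed_segment (P (U i)) (P (V j)) \<inter> closed_segment (P (U i')) (P (V j'))
      \<subseteq> {P (U i), P (V j)} \<inter> {P (U i'), P (V j')}"
    if "i < 3" "j < 3" "i' < 3" "j' < 3" "(i, j) \<noteq> (i', j')" "(i, j) \<noteq> (0, 0)" "(i', j') \<noteq> (0, 0)"
    for i j i' j'
    using planar_straight_segments_Int[OF ps edge_in_F[of i j] edge_in_F[of i' j']] that
      edge_eq[of i j i' j'] Int_image[of i j i' j']
    unfolding P_def by blast
  have arc_segment: "path_image g0 \<inter> closed_segment (P (U i)) (P (V j))
      \<subseteq> {P (U 0), P (V 0)} \<inter> {P (U i), P (V j)}"
    if "i < 3" "j < 3" "(i, j) \<noteq> (0, 0)" for i j
  proof -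
    have "(U i, V j) \<noteq> (u0, v0)"
      using that inj_on_eq_iff[OF injUV(1), of i 0] inj_on_eq_iff[OF injUV(2), of j 0] U0 by auto
    then show ?thesis
      using g0(4)[OF in_UV(1)[OF that(1)] in_UV(2)[OF that(2)]] Int_image[of 0 0 i j] U0 by auto
  qed
  have inj: "inj_on (P \<circ> U) {..<3}" "inj_on (P \<circ> V) {..<3}"
    using comp_inj_on[OF injUV(1) inj_on_subset[OF injP]] comp_inj_on[OF injUV(2) inj_on_subset[OF injP]]
    by (auto simp: UV)
  have "P ` {u0, u1, u2} \<inter> P ` {v0, v1, v2} = {}"
    using inj_on_image_Int[OF injP, of "{u0, u1, u2}" "{v0, v1, v2}"] UV_disjoint by auto
  then have disjoint: "(P \<circ> U) ` {..<3} \<inter> (P \<circ> V) ` {..<3} = {}"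
    unfolding image_comp[symmetric] UV .
  have arcs: "\<forall>i<3. \<forall>j<3. arc (?g i j) \<and> pathstart (?g i j) = (P \<circ> U) i \<and> pathfinish (?g i j) = (P \<circ> V) j"
    using g0(1-3) P_UV U0 by auto
  have meets: "\<forall>i<3. \<forall>j<3. \<forall>i'<3. \<forall>j'<3. (i, j) \<noteq> (i', j') \<longrightarrow>
      path_image (?g i j) \<inter> path_image (?g i' j') \<subseteq> {(P \<circ> U) i, (P \<circ> V) j} \<inter> {(P \<circ> U) i', (P \<circ> V) j'}"
  proof (intro allI impI)
    fix i j i' j' :: nat assume ij: "i < 3" "j < 3" "i' < 3" "j' < 3" "(i, j) \<noteq> (i', j')"
    consider "(i, j) = (0, 0)" | "(i', j') = (0, 0)" | "(i, j) \<noteq> (0, 0)" "(i', j') \<noteq> (0, 0)"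
      by blast
    then show "path_image (?g i j) \<inter> path_image (?g i' j') \<subseteq>
      {(P \<circ> U) i, (P \<circ> V) j} \<inter> {(P \<circ> U) i', (P \<circ> V) j'}"
    proof cases
      case 1
      then show ?thesis using ij arc_segment[of i' j'] by auto
    next
      case 2
      then show ?thesis using ij arc_segment[of i j] by auto
    next
      case 3
      then have "path_image (?g i j) = closed_segment (P (U i)) (P (V j))"
        "path_image (?g i' j') = closed_segment (P (U i')) (P (V j'))"
        by auto
      then show ?thesis using ij 3 segments[of i j i' j'] by simp
    qed
  qed
  show ?thesis
    unfolding K33_arc_embedding_def by (intro conjI inj disjoint arcs meets)
qed

lemma planar_straight_no_K33:
  assumes ps: "planar_straight W F p"
    and distinct: "distinct [u0, u1, u2, v0, v1, v2]" and W: "{u0, u1, u2, v0, v1, v2} \<subseteq> W"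
    and edges: "\<And>u v. u \<in> {u0, u1, u2} \<Longrightarrow> v \<in> {v0, v1, v2} \<Longrightarrow> {u, v} \<in> F"
  shows False
proof -
  let ?P = "complex_of_vec \<circ> p"
  have "?P u0 \<noteq> ?P v0"
    using inj_on_eq_iff[OF inj_on_planar_straight[OF ps], of u0 v0] distinct W by auto
  then have arc: "arc (linepath (?P u0) (?P v0))" by simp
  have meet: "path_image (linepath (?P u0) (?P v0)) \<inter> closed_segment (?P u) (?P v)
      \<subseteq> ?P ` ({u0, v0} \<inter> {u, v})"
    if "u \<in> {u0, u1, u2}" "v \<in> {v0, v1, v2}" "(u, v) \<noteq> (u0, v0)" for u v
  proof -
    have "{u0, v0} \<noteq> {u, v}" using that distinct by (auto simp: doubleton_eq_iff)
    then show ?thesis using planar_straight_segments_Int[OF ps edges edges] that by simp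
  qed
  show False
    using planar_straight_K33_arc_embedding[OF ps distinct W edges arc _ _ meet]
      K33_no_arc_embedding by simp
qed

lemma planar_straight_no_subdivided_K33:
  assumes ps: "planar_straight W F p"
    and distinct: "distinct [u0, u1, u2, v0, v1, v2]" and W: "{u0, u1, u2, v0, v1, v2} \<subseteq> W"
    and edges: "\<And>u v. u \<in> {u0, u1, u2} \<Longrightarrow> v \<in> {v0, v1, v2} \<Longrightarrow> (u, v) \<noteq> (u0, v0) \<Longrightarrow> {u, v} \<in> F"
    and m: "m \<in> W" "m \<notin> {u0, u1, u2, v0, v1, v2}" "{u0, m} \<in> F" "{m, v0} \<in> F"
  shows False
proof -
  let ?P = "complex_of_vec \<circ> p"
  let ?g0 = "linepath (?P u0) (?P m) +++ linepath (?P m) (?P v0)"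
  have injP: "inj_on ?P W" by (rule inj_on_planar_straight[OF ps])
  have neq: "{u0, m} \<noteq> {m, v0}" and cap: "{u0, m} \<inter> {m, v0} = {m}"
    using m(2) distinct by auto
  have "?P u0 \<noteq> ?P m" "?P m \<noteq> ?P v0"
    using inj_on_eq_iff[OF injP, of u0 m] inj_on_eq_iff[OF injP, of m v0] m(1,2) W by auto
  moreover have "closed_segment (?P u0) (?P m) \<inter> closed_segment (?P m) (?P v0) \<subseteq> {?P m}"
    using planar_straight_segments_Int[OF ps m(3,4) neq] unfolding cap by simp
  ultimately have arc: "arc ?g0" by (intro arc_join) auto
  have meet: "path_image ?g0 \<inter> closed_segment (?P u) (?P v) \<subseteq> ?P ` ({u0, v0} \<inter> {u, v})"
    if "u \<in> {u0, u1, u2}" "v \<in> {v0, v1, v2}" "(u, v) \<noteq> (u0, v0)" for u v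
  proof -
    have "m \<notin> {u, v}" using that m(2) by auto
    then have neq: "{u0, m} \<noteq> {u, v}" "{m, v0} \<noteq> {u, v}"
      and sub: "{u0, m} \<inter> {u, v} \<subseteq> {u0, v0} \<inter> {u, v}" "{m, v0} \<inter> {u, v} \<subseteq> {u0, v0} \<inter> {u, v}"
      by auto
    have "path_image ?g0 = closed_segment (?P u0) (?P m) \<union> closed_segment (?P m) (?P v0)"
      by (simp add: path_image_join)
    then have "path_image ?g0 \<inter> closed_segment (?P u) (?P v) \<subseteq>
        ?P ` ({u0, m} \<inter> {u, v}) \<union> ?P ` ({m, v0} \<inter> {u, v})"
      using planar_straight_segments_Int[OF ps m(3) edges[OF that] neq(1)]
        planar_straight_segments_Int[OF ps m(4) edges[OF that] neq(2)]
      by blast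
    also have "\<dots> \<subseteq> ?P ` ({u0, v0} \<inter> {u, v})"
      using sub by (intro Un_least image_mono)
    finally show ?thesis .
  qed
  show False
    using planar_straight_K33_arc_embedding[OF ps distinct W edges arc _ _ meet]
      K33_no_arc_embedding by simp
qed

lemma cycV_eq: "cycV = {Av 1, Av 2, Av 3, Av 4, Bv 1, Bv 2, Bv 3, Bv 4, Cv 1, Cv 2, Cv 3, Cv 4}"
proof -
  have "{1..4::nat} = {1, 2, 3, 4}" by auto
  then show ?thesis unfolding cycV_def by blast
qed

lemma QV_eq: "QV = {Qv 1 1, Qv 1 2, Qv 2 1, Qv 2 2, Qv 3 1, Qv 3 2, Qv 4 1, Qv 4 2}"
proof -
  have "{1..4::nat} = {1, 2, 3, 4}" "{1..2::nat} = {1, 2}" by auto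
  then show ?thesis unfolding QV_def by blast
qed

lemma card_QV: "card QV = 8"
  by (simp add: QV_eq)

lemma QV_subset_GV: "QV \<subseteq> GV" and cycV_subset_GV: "cycV \<subseteq> GV"
  by (auto simp: GV_def)

lemma QV_Int_cycV: "QV \<inter> cycV = {}"
  by (auto simp: QV_def cycV_def)

lemma GE_Q_cycle:
  assumes "q \<in> QV" "x \<in> cycV" shows "{q, x} \<in> GE"
proof -
  obtain i j where q: "q = Qv i j" "i \<in> {1..4}" "j \<in> {1..2}"
    using assms(1) unfolding QV_def by blast
  from assms(2) consider k where "x = Av k" "k \<in> {1..4}" | k where "x = Bv k" "k \<in> {1..4}"
    | k where "x = Cv k" "k \<in> {1..4}"
    unfolding cycV_def by blast
  then show ?thesis
  proof cases
    case 1
    then have "{q, x} \<in> {{Qv i j, Av k} | i j k. i \<in> {1..4} \<and> k \<in> {1..4} \<and> j \<in> {1..2}}"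
      using q by blast
    then show ?thesis unfolding GE_def by blast
  next
    case 2
    then have "{q, x} \<in> {{Qv i j, Bv k} | i j k. i \<in> {1..4} \<and> k \<in> {1..4} \<and> j \<in> {1..2}}"
      using q by blast
    then show ?thesis unfolding GE_def by blast
  next
    case 3
    then have "{q, x} \<in> {{Qv i j, Cv k} | i j k. i \<in> {1..4} \<and> k \<in> {1..4} \<and> j \<in> {1..2}}"
      using q by blast
    then show ?thesis unfolding GE_def by blast
  qed
qed

lemma GE_A_cycle:
  assumes "i \<in> {1..4}" shows "{Av i, Av (nxt i)} \<in> GE"
proof -
  have "{Av i, Av (nxt i)} \<in> {{Av i, Av (nxt i)} | i. i \<in> {1..4}}" using assms by blast
  then show ?thesis unfolding GE_def by blast
qed

lemma nxt_simps [simp]: "nxt 1 = 2" "nxt 2 = 3" "nxt 3 = 4" "nxt 4 = 1"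
  by (simp_all add: nxt_def)

context
  fixes V :: "'v set" and E :: "'v set set" and l :: nat and A :: "'v \<Rightarrow> nat set"
    and p :: "'v \<Rightarrow> real^2"
  assumes story: "planar_geometric_storyplan V E l A p"
begin

lemma storyplan_intervals: "\<forall>v\<in>V. \<exists>s e. 1 \<le> s \<and> s \<le> e \<and> e \<le> l \<and> A v = {s..e}"
  using story unfolding planar_geometric_storyplan_def by (rule conjunct1)

lemma storyplan_edges_meet: "\<forall>u\<in>V. \<forall>v\<in>V. {u, v} \<in> E \<longrightarrow> A u \<inter> A v \<noteq> {}"
  using story unfolding planar_geometric_storyplan_def by (rule conjunct1[OF conjunct2])

lemma storyplan_frames:
  "\<forall>t\<in>{1..l}. planar_straight (visible V A t) {e \<in> E. e \<subseteq> visible V A t} p"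
  using story unfolding planar_geometric_storyplan_def by (rule conjunct2[OF conjunct2])

lemma storyplan_interval:
  assumes "v \<in> V"
  shows "A v = {Min (A v)..Max (A v)}" "1 \<le> Min (A v)" "Max (A v) \<le> l"
    and "t \<in> A v \<longleftrightarrow> Min (A v) \<le> t \<and> t \<le> Max (A v)" "Min (A v) \<le> Max (A v)"
proof -
  from bspec[OF storyplan_intervals assms] obtain s e
    where se: "1 \<le> s" "s \<le> e" "e \<le> l" "A v = {s..e}" by blast
  have "Min {s..e} = s" "Max {s..e} = e"
    using se(2) by (intro Min_eqI Max_eqI; simp)+
  then show "A v = {Min (A v)..Max (A v)}" "1 \<le> Min (A v)" "Max (A v) \<le> l"
    and "t \<in> A v \<longleftrightarrow> Min (A v) \<le> t \<and> t \<le> Max (A v)" "Min (A v) \<le> Max (A v)"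
    using se by simp_all
qed

lemma storyplan_adjacent:
  assumes "u \<in> V" "v \<in> V" "{u, v} \<in> E"
  shows "Min (A u) \<le> Max (A v)"
proof -
  obtain t where "t \<in> A u" "t \<in> A v"
    using storyplan_edges_meet assms by blast
  then have "Min (A u) \<le> t" "t \<le> Max (A v)"
    using storyplan_interval(4)[OF assms(1), of t] storyplan_interval(4)[OF assms(2), of t] by simp_all
  then show ?thesis by (rule order_trans)
qed

lemma storyplan_visible_together_iff:
  assumes "finite X" "X \<noteq> {}" "X \<subseteq> V"
  shows "X \<subseteq> visible V A t \<longleftrightarrow>
    t \<in> {Max ((\<lambda>x. Min (A x)) ` X)..Min ((\<lambda>x. Max (A x)) ` X)}"
  using assms storyplan_interval(4) by (auto simp: visible_def subset_iff)

lemma storyplan_adjacent_to_all: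
  assumes "finite X" "X \<noteq> {}" "X \<subseteq> V" "v \<in> V" "\<And>x. x \<in> X \<Longrightarrow> {v, x} \<in> E"
  shows "Min (A v) \<le> Min ((\<lambda>x. Max (A x)) ` X)" "Max ((\<lambda>x. Min (A x)) ` X) \<le> Max (A v)"
  using assms storyplan_adjacent[of v] storyplan_adjacent[of _ v] by (auto simp: insert_commute)

lemma storyplan_frame:
  assumes "t \<in> {1..l}"
  shows "planar_straight (visible V A t) {e \<in> E. e \<subseteq> visible V A t} p"
  using storyplan_frames assms by blast

end

lemma storyplan_no_K33_frame:
  assumes story: "planar_geometric_storyplan GV GE l A p" and t: "t \<in> {1..l}"
    and Q: "{q0, q1, q2} \<subseteq> QV" "distinct [q0, q1, q2]"
    and X: "{x0, x1, x2} \<subseteq> cycV" "distinct [x0, x1, x2]"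
    and visible: "{q0, q1, q2, x0, x1, x2} \<subseteq> visible GV A t"
  shows False
proof (rule planar_straight_no_K33[OF storyplan_frame[OF story t] _ visible])
  show "distinct [q0, q1, q2, x0, x1, x2]"
    using Q X QV_Int_cycV by auto
  show "{u, v} \<in> {e \<in> GE. e \<subseteq> visible GV A t}" if "u \<in> {q0, q1, q2}" "v \<in> {x0, x1, x2}" for u v
    using that Q(1) X(1) visible GE_Q_cycle by blast
qed

lemma storyplan_unique_Q_when_cycles_visible:
  assumes story: "planar_geometric_storyplan GV GE l A p" and t: "t \<in> {1..l}"
    and cycles: "cycV \<subseteq> visible GV A t"
    and Q: "q \<in> QV" "q' \<in> QV" "q \<in> visible GV A t" "q' \<in> visible GV A t"
  shows "q = q'"
proof (rule ccontr)
  assume "q \<noteq> q'"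
  let ?F = "{e \<in> GE. e \<subseteq> visible GV A t}"
  have cyc: "Av 1 \<in> cycV" "Av 2 \<in> cycV" "Av 3 \<in> cycV" "Av 4 \<in> cycV" "Bv 1 \<in> cycV"
    by (simp_all add: cycV_eq)
  have Q_edges: "{q, x} \<in> ?F" "{x, q'} \<in> ?F" if "x \<in> cycV" for x
    using GE_Q_cycle[OF Q(1) that] GE_Q_cycle[OF Q(2) that] cycles that Q(3,4)
    by (simp_all add: insert_commute subset_iff)
  have "{Av 1, Av 2} \<in> GE" "{Av 2, Av 3} \<in> GE" "{Av 3, Av 4} \<in> GE" "{Av 4, Av 1} \<in> GE"
    by (rule GE_A_cycle[of 1, unfolded nxt_simps] GE_A_cycle[of 2, unfolded nxt_simps]
        GE_A_cycle[of 3, unfolded nxt_simps] GE_A_cycle[of 4, unfolded nxt_simps]; simp)+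
  then have "{Av 1, Av 2} \<in> ?F" "{Av 1, Av 4} \<in> ?F" "{Av 3, Av 2} \<in> ?F" "{Av 3, Av 4} \<in> ?F"
    using cyc cycles by (auto simp: insert_commute)
  then have edges: "{u, v} \<in> ?F"
    if "u \<in> {q, Av 1, Av 3}" "v \<in> {q', Av 2, Av 4}" "(u, v) \<noteq> (q, q')" for u v
    using that Q_edges(1)[OF cyc(2)] Q_edges(1)[OF cyc(4)] Q_edges(2)[OF cyc(1)] Q_edges(2)[OF cyc(3)]
    by auto
  have "distinct [q, Av 1, Av 3, q', Av 2, Av 4]" "Bv 1 \<notin> {q, Av 1, Av 3, q', Av 2, Av 4}"
    using \<open>q \<noteq> q'\<close> Q(1,2) by (auto simp: QV_def)
  moreover have "{q, Av 1, Av 3, q', Av 2, Av 4} \<subseteq> visible GV A t" "Bv 1 \<in> visible GV A t"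
    using Q(3,4) cycles cyc by auto
  ultimately show False
    using planar_straight_no_subdivided_K33[OF storyplan_frame[OF story t] _ _ edges _ _
        Q_edges(1)[OF cyc(5)] Q_edges(2)[OF cyc(5)]]
    by blast
qed

lemma card_intervals_within_window:
  fixes I :: "'a \<Rightarrow> nat set"
  assumes fin: "finite Q" and LR: "L \<le> R"
    and I: "\<And>q. q \<in> Q \<Longrightarrow> I q = {s q..e q}" "\<And>q. q \<in> Q \<Longrightarrow> s q \<le> e q"
    and meets: "\<And>q. q \<in> Q \<Longrightarrow> s q \<le> R" "\<And>q. q \<in> Q \<Longrightarrow> L \<le> e q"
    and unique: "\<And>q q' t. q \<in> Q \<Longrightarrow> q' \<in> Q \<Longrightarrow> t \<in> {L..R} \<Longrightarrow> t \<in> I q \<Longrightarrow> t \<in> I q' \<Longrightarrow> q = q'"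
  shows "card Q \<le> card (I ` {q \<in> Q. I q \<subseteq> {L..R}}) + 2"
proof -
  define Qin where "Qin = {q \<in> Q. I q \<subseteq> {L..R}}"
  have at_most_one: "card {q \<in> Q. t \<in> I q} \<le> 1" if "t \<in> {L..R}" for t
  proof -
    have "finite {q \<in> Q. t \<in> I q}" using fin by simp
    with unique[OF _ _ that] show ?thesis
      by (simp add: One_nat_def card_le_Suc0_iff_eq)
  qed
  have "L \<in> I q \<or> R \<in> I q" if "q \<in> Q - Qin" for q
    using that meets I unfolding Qin_def by auto
  then have "Q - Qin \<subseteq> {q \<in> Q. L \<in> I q} \<union> {q \<in> Q. R \<in> I q}" by blast
  then have "card (Q - Qin) \<le> card ({q \<in> Q. L \<in> I q} \<union> {q \<in> Q. R \<in> I q})"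
    using fin by (intro card_mono) auto
  also have "\<dots> \<le> card {q \<in> Q. L \<in> I q} + card {q \<in> Q. R \<in> I q}"
    by (rule card_Un_le)
  also have "\<dots> \<le> 2" using at_most_one[of L] at_most_one[of R] LR by simp
  finally have "card (Q - Qin) \<le> 2" .
  moreover have "card Q \<le> card Qin + card (Q - Qin)"
    using card_Un_le[of Qin "Q - Qin"] by (simp add: Qin_def Un_absorb1)
  ultimately have "card Q \<le> card Qin + 2" by simp
  moreover have "inj_on I Qin"
  proof (rule inj_onI)
    fix q q' assume "q \<in> Qin" "q' \<in> Qin" "I q = I q'"
    then show "q = q'"
      using unique[of q q' "s q"] I[of q] I[of q'] by (auto simp: Qin_def)
  qed
  ultimately show ?thesis by (simp add: card_image Qin_def)
qed

lemma finite_cycV: "finite cycV" and cycV_not_empty: "cycV \<noteq> {}"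
  by (simp_all add: cycV_eq)

lemma storyplan_cycles_visible_together:
  assumes story: "planar_geometric_storyplan GV GE l A p"
  shows "\<exists>t. cycV \<subseteq> visible GV A t"
proof (rule ccontr)
  assume none: "\<nexists>t. cycV \<subseteq> visible GV A t"
  let ?s = "\<lambda>v. Min (A v)" and ?e = "\<lambda>v. Max (A v)"
  define L where "L = Max (?s ` cycV)"
  define R where "R = Min (?e ` cycV)"
  have "L \<notin> {L..R}"
    using none storyplan_visible_together_iff[OF story finite_cycV cycV_not_empty cycV_subset_GV] by (simp add: L_def R_def)
  then have "R < L" by simp
  have Av: "Av i \<in> cycV" "Av i \<in> GV" if "i \<in> {1..4}" for i
    using that cycV_subset_GV by (auto simp: cycV_def)
  define M where "M = Min ((\<lambda>i. ?e (Av i)) ` {1..4})"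
  have "M \<in> (\<lambda>i. ?e (Av i)) ` {1..4}" unfolding M_def by (intro Min_in) auto
  then obtain k where k: "k \<in> {1..4}" "?e (Av k) = M" by blast
  have k_min: "?e (Av k) \<le> ?e (Av i)" if "i \<in> {1..4}" for i
    unfolding k(2) M_def using that by (intro Min_le) auto
  define pk where "pk = (k + 2) mod 4 + 1"
  have "k = 1 \<or> k = 2 \<or> k = 3 \<or> k = 4" using k(1) by auto
  then have idx: "nxt k \<in> {1..4}" "pk \<in> {1..4}" "nxt pk = k" "distinct [k, nxt k, pk]"
    by (auto simp: nxt_def pk_def)
  define m where "m = min (?e (Av k)) L"
  have Av_visible: "Av j \<in> visible GV A m" if "j \<in> {k, nxt k, pk}" for j
  proof -
    have j: "j \<in> {1..4}" using that idx k(1) by auto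
    have "{Av (nxt k), Av k} \<in> GE" "{Av pk, Av k} \<in> GE"
      using GE_A_cycle[OF k(1)] GE_A_cycle[OF idx(2)] idx(3) by (simp_all add: insert_commute)
    then have "?s (Av j) \<le> ?e (Av k)"
      using that storyplan_interval(5)[OF story Av(2)[OF k(1)]]
        storyplan_adjacent[OF story Av(2)[OF idx(1)] Av(2)[OF k(1)]]
        storyplan_adjacent[OF story Av(2)[OF idx(2)] Av(2)[OF k(1)]] by auto
    moreover have "?s (Av j) \<le> L"
      unfolding L_def using Av(1)[OF j] finite_cycV by (intro Max_ge) auto
    ultimately show ?thesis
      using k_min[OF j] storyplan_interval(4)[OF story Av(2)[OF j], of m] Av(2)[OF j]
      by (auto simp: m_def visible_def)
  qed
  have Q_visible: "q \<in> visible GV A m" if "q \<in> QV" for q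
  proof -
    have q: "q \<in> GV" using that QV_subset_GV by blast
    have "?s q \<le> R" "L \<le> ?e q"
      using storyplan_adjacent_to_all[OF story finite_cycV cycV_not_empty cycV_subset_GV q GE_Q_cycle[OF that]]
      unfolding L_def R_def by simp_all
    moreover have "?s q \<le> ?e (Av k)"
      using storyplan_adjacent[OF story q Av(2)[OF k(1)] GE_Q_cycle[OF that Av(1)[OF k(1)]]] .
    ultimately show ?thesis
      using \<open>R < L\<close> storyplan_interval(4)[OF story q, of m] q by (auto simp: m_def visible_def)
  qed
  have "1 \<le> ?s (Av k)" "?s (Av k) \<le> ?e (Av k)" "?e (Av k) \<le> l" "?s (Av k) \<le> L"
    using storyplan_interval(2,3,5)[OF story Av(2)[OF k(1)]] Av(1)[OF k(1)] finite_cycV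
    by (auto simp: L_def)
  then have "m \<in> {1..l}" by (simp add: m_def)
  moreover have "{Qv 1 1, Qv 1 2, Qv 2 1} \<subseteq> QV" by (simp add: QV_eq)
  ultimately show False
    using storyplan_no_K33_frame[OF story, of m "Qv 1 1" "Qv 1 2" "Qv 2 1" "Av k" "Av (nxt k)" "Av pk"]
      Q_visible Av_visible Av(1) k(1) idx by auto
qed

lemma storyplan_Q_intervals_in_cycle_window:
  assumes story: "planar_geometric_storyplan GV GE l A p"
  shows "card QV \<le> card (A ` {q \<in> QV. A q \<subseteq> {t. cycV \<subseteq> visible GV A t}}) + 2"
proof -
  let ?s = "\<lambda>v. Min (A v)" and ?e = "\<lambda>v. Max (A v)"
  define L where "L = Max (?s ` cycV)"
  define R where "R = Min (?e ` cycV)"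
  have window: "{t. cycV \<subseteq> visible GV A t} = {L..R}"
    using storyplan_visible_together_iff[OF story finite_cycV cycV_not_empty cycV_subset_GV] by (auto simp: L_def R_def)
  have Q: "q \<in> GV" if "q \<in> QV" for q
    using that QV_subset_GV by blast
  have "card QV \<le> card (A ` {q \<in> QV. A q \<subseteq> {L..R}}) + 2"
  proof (rule card_intervals_within_window[where s = ?s and e = ?e])
    show "finite QV" by (simp add: QV_eq)
    obtain t where "cycV \<subseteq> visible GV A t" using storyplan_cycles_visible_together[OF story] ..
    then have "t \<in> {L..R}" using window by blast
    then show "L \<le> R" by simp
    show "A q = {?s q..?e q}" "?s q \<le> ?e q" "?s q \<le> R" "L \<le> ?e q" if "q \<in> QV" for q
      using storyplan_interval(1,5)[OF story Q[OF that]]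
        storyplan_adjacent_to_all[OF story finite_cycV cycV_not_empty cycV_subset_GV Q[OF that]
          GE_Q_cycle[OF that]]
      by (simp_all add: L_def R_def)
    show "q = q'" if "q \<in> QV" "q' \<in> QV" "t \<in> {L..R}" "t \<in> A q" "t \<in> A q'" for q q' t
    proof (rule storyplan_unique_Q_when_cycles_visible[OF story _ _ that(1,2)])
      show "t \<in> {1..l}"
        using that(4) storyplan_interval(2,3,4)[OF story Q[OF that(1)]] by auto
      show "cycV \<subseteq> visible GV A t" using that(3) window by blast
      show "q \<in> visible GV A t" "q' \<in> visible GV A t"
        using that Q by (auto simp: visible_def)
    qed
  qed
  then show ?thesis unfolding window .
qed

theorem lemma3:
  fixes l :: nat and A :: "vtx \<Rightarrow> nat set" and p :: "vtx \<Rightarrow> real^2"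
  assumes "planar_geometric_storyplan GV GE l A p"
  shows "\<exists>I' \<subseteq> A ` QV. card I' \<ge> 6 \<and>
           (\<forall>J \<in> I'. \<forall>t \<in> J. cycV \<subseteq> visible GV A t)"
proof (intro exI conjI ballI)
  let ?I' = "A ` {q \<in> QV. A q \<subseteq> {t. cycV \<subseteq> visible GV A t}}"
  show "?I' \<subseteq> A ` QV" by blast
  show "card ?I' \<ge> 6"
    using storyplan_Q_intervals_in_cycle_window[OF assms] card_QV by simp
  show "cycV \<subseteq> visible GV A t" if "J \<in> ?I'" "t \<in> J" for J t
    using that by blast
qed

end
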